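(* Let $p\ge3$ be a prime and $G_7=T\rtimes\langle x,y\rangle\le AGL(2,p)$ with $x=\|1,1;0,1\|$ and $y=\|-1,0;0,-1\|$. Let $H=\langle r_1,r_2\rangle\le G_7$ with $|r_1|=|r_2|=2$ and $H\cong D_{2p}$, and suppose $\mathrm{Core}_{G_7}(H)=1$. Then for every $r_0\in G_7$ with $|r_0|=2$ we have $\langle r_0,r_1,r_2\rangle\ne G_7$.
   Context: $D_{2p}$ is dihedral of order $2p$; $\mathrm{Core}_G(H)=\bigcap_{g\in G}g^{-1}Hg$. $\|a,b;c,d\|$ is the $2\times2$ matrix over $\mathbb{F}_p$ with rows $(a,b),(c,d)$; $T\cong\mathbb{Z}_p^2$ is the group of translations $t_a:v\mapsto v+a$ of $V=\mathbb{F}_p^2$ (row vectors, right $GL(2,p)$-action), $AGL(2,p)=T\rtimes GL(2,p)$ with $g^{-1}t_ag=t_{ag}$. *)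

theory Defs
  imports "HOL-Algebra.Algebra"
begin

text \<open>The plane V = F_p^2, encoded as pairs of residues in {0..<p}.\<close>
definition Vp :: "int \<Rightarrow> (int \<times> int) set" where
  "Vp p = {0..<p} \<times> {0..<p}"

definition transl :: "int \<Rightarrow> int \<times> int \<Rightarrow> (int \<times> int \<Rightarrow> int \<times> int)" where
  "transl p a = (\<lambda>v\<in>Vp p. ((fst v + fst a) mod p, (snd v + snd a) mod p))"

text \<open>Right action of the matrix ||a,b;c,d|| on row vectors: (v1,v2) |-> (v1 a + v2 c, v1 b + v2 d).\<close>
definition matmap :: "int \<Rightarrow> int \<Rightarrow> int \<Rightarrow> int \<Rightarrow> int \<Rightarrow> (int \<times> int \<Rightarrow> int \<times> int)" where
  "matmap p a b c d = (\<lambda>v\<in>Vp p. ((fst v * a + snd v * c) mod p, (fst v * b + snd v * d) mod p))"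

text \<open>G_7 = T \<rtimes> <x,y> with x = ||1,1;0,1||, y = ||-1,0;0,-1||, as a permutation group on V.\<close>
definition G7_carrier :: "int \<Rightarrow> (int \<times> int \<Rightarrow> int \<times> int) set" where
  "G7_carrier p = generate (BijGroup (Vp p))
      ((transl p ` Vp p) \<union> {matmap p 1 1 0 1, matmap p (-1) 0 0 (-1)})"

definition G7 :: "int \<Rightarrow> (int \<times> int \<Rightarrow> int \<times> int) monoid" where
  "G7 p = (BijGroup (Vp p)) \<lparr>carrier := G7_carrier p\<rparr>"

text \<open>Dihedral group of order 2n: elements (i,e), i mod n, e in {0,1};
  (i,0) rotations, (i,1) reflections.\<close>
definition dihedral :: "int \<Rightarrow> (int \<times> int) monoid" where
  "dihedral n = \<lparr>carrier = {0..<n} \<times> {0,1},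
     monoid.mult = (\<lambda>u w. ((fst u + (if snd u = 0 then fst w else - fst w)) mod n, (snd u + snd w) mod 2)),
     one = (0,0)\<rparr>"

definition core :: "('a, 'b) monoid_scheme \<Rightarrow> 'a set \<Rightarrow> 'a set" where
  "core G H = (\<Inter>g\<in>carrier G. {inv\<^bsub>G\<^esub> g \<otimes>\<^bsub>G\<^esub> h \<otimes>\<^bsub>G\<^esub> g | h. h \<in> H})"

end

theory Submission
  imports Defs
begin

text \<open>Every element of G_7 acts as v |-> v (s ||1,k;0,1||) + e with s = +-1, and composing two such
  maps multiplies the signs and adds the shear parameters k. Squaring therefore doubles k, so an
  involution has 2k = 0 (mod p), hence k = 0 (mod p) as p is odd. All involutions thus lie in the
  proper subgroup T \<rtimes> <y> of maps with k = 0 (mod p), which does not contain x.\<close>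

definition affine_map :: "int \<Rightarrow> int \<Rightarrow> int \<Rightarrow> int \<Rightarrow> int \<Rightarrow> (int \<times> int \<Rightarrow> int \<times> int)" where
  "affine_map p s k e1 e2 =
     (\<lambda>v\<in>Vp p. ((s * fst v + e1) mod p, (s * k * fst v + s * snd v + e2) mod p))"

text \<open>With Z = UNIV this contains G_7; with Z = pZ it is T \<rtimes> <y>.\<close>
definition affine_maps :: "int \<Rightarrow> int set \<Rightarrow> (int \<times> int \<Rightarrow> int \<times> int) set" where
  "affine_maps p Z = {affine_map p s k e1 e2 | s k e1 e2. s * s = 1 \<and> k \<in> Z}"

lemma affine_map_in_Vp: "p > 0 \<Longrightarrow> v \<in> Vp p \<Longrightarrow> affine_map p s k e1 e2 v \<in> Vp p"
  by (simp add: affine_map_def Vp_def)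

lemma mod_mult_add_mod_eq: "(a * (x mod p) + c) mod p = (a * x + c) mod p" for a c x p :: int
  by (metis mod_add_left_eq mod_mult_right_eq)

lemma mod_mult_add_mult_add_mod_eq:
  "(a * (x mod p) + b * (y mod p) + c) mod p = (a * x + b * y + c) mod p" for a b c x y p :: int
  using mod_mult_add_mod_eq[of a x p "b * (y mod p) + c"] mod_mult_add_mod_eq[of b y p "a * x + c"]
  by (simp add: ac_simps)

lemma compose_affine_map:
  assumes "p > 0"
  shows "compose (Vp p) (affine_map p s k e1 e2) (affine_map p s' k' f1 f2)
       = affine_map p (s * s') (k + k') (s * f1 + e1) (s * k * f1 + s * f2 + e2)"
proof
  fix v :: "int \<times> int"
  show "compose (Vp p) (affine_map p s k e1 e2) (affine_map p s' k' f1 f2) v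
      = affine_map p (s * s') (k + k') (s * f1 + e1) (s * k * f1 + s * f2 + e2) v"
  proof (cases "v \<in> Vp p")
    case True
    then have "affine_map p s' k' f1 f2 v \<in> Vp p"
      using affine_map_in_Vp[OF assms] by blast
    with True show ?thesis
      by (simp add: compose_def affine_map_def mod_mult_add_mod_eq mod_mult_add_mult_add_mod_eq,
          simp add: algebra_simps)
  qed (simp add: compose_def affine_map_def)
qed

lemma affine_map_identity: "p > 0 \<Longrightarrow> affine_map p 1 0 0 0 = (\<lambda>v\<in>Vp p. v)"
  by (auto simp: affine_map_def Vp_def)

lemma compose_affine_map_inverse:
  assumes "p > 0" "s * s = 1"
  shows "compose (Vp p) (affine_map p s (-k) (-s*e1) (s*k*e1 - s*e2)) (affine_map p s k e1 e2)
           = (\<lambda>v\<in>Vp p. v)"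
    and "compose (Vp p) (affine_map p s k e1 e2) (affine_map p s (-k) (-s*e1) (s*k*e1 - s*e2))
           = (\<lambda>v\<in>Vp p. v)"
proof -
  have s_cancel: "s * (s * x) = x" for x
    by (metis assms(2) mult.assoc mult_1)
  show "compose (Vp p) (affine_map p s (-k) (-s*e1) (s*k*e1 - s*e2)) (affine_map p s k e1 e2)
          = (\<lambda>v\<in>Vp p. v)"
    by (simp add: compose_affine_map[OF assms(1)] assms(2) algebra_simps s_cancel
        flip: affine_map_identity[OF assms(1)])
  show "compose (Vp p) (affine_map p s k e1 e2) (affine_map p s (-k) (-s*e1) (s*k*e1 - s*e2))
          = (\<lambda>v\<in>Vp p. v)"
    by (simp add: compose_affine_map[OF assms(1)] assms(2) algebra_simps s_cancel
        flip: affine_map_identity[OF assms(1)])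
qed

lemma affine_map_Bij:
  assumes "p > 0" "s * s = 1"
  shows "affine_map p s k e1 e2 \<in> Bij (Vp p)"
proof -
  let ?f = "affine_map p s k e1 e2" and ?g = "affine_map p s (-k) (-s*e1) (s*k*e1 - s*e2)"
  have "?g (?f v) = v" "?f (?g v) = v" if "v \<in> Vp p" for v
    using compose_affine_map_inverse[OF assms, THEN fun_cong[where x = v]] that
      affine_map_in_Vp[OF assms(1)]
    by (simp_all add: compose_def)
  then have "bij_betw ?f (Vp p) (Vp p)"
    by (intro bij_betwI[of _ _ _ ?g]) (auto simp: affine_map_in_Vp[OF assms(1)])
  then show ?thesis
    by (simp add: Bij_def affine_map_def)
qed

lemma affine_map_mult:
  assumes "p > 0" "s * s = 1" "s' * s' = 1"
  shows "affine_map p s k e1 e2 \<otimes>\<^bsub>BijGroup (Vp p)\<^esub> affine_map p s' k' f1 f2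
       = affine_map p (s * s') (k + k') (s * f1 + e1) (s * k * f1 + s * f2 + e2)"
  using affine_map_Bij[OF assms(1,2)] affine_map_Bij[OF assms(1,3)]
  by (simp add: BijGroup_def compose_affine_map[OF assms(1)])

lemma affine_map_inv:
  assumes "p > 0" "s * s = 1"
  shows "inv\<^bsub>BijGroup (Vp p)\<^esub> affine_map p s k e1 e2
       = affine_map p s (-k) (-s*e1) (s*k*e1 - s*e2)"
  using affine_map_Bij[OF assms] compose_affine_map_inverse(1)[OF assms]
  by (intro group.inv_equality[OF group_BijGroup]) (simp_all add: BijGroup_def)

lemma affine_mapsI: "s * s = 1 \<Longrightarrow> k \<in> Z \<Longrightarrow> affine_map p s k e1 e2 \<in> affine_maps p Z"
  by (auto simp: affine_maps_def)

lemma subgroup_affine_maps: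
  assumes "p > 0" and "0 \<in> Z"
    and add_closed: "\<And>a b. a \<in> Z \<Longrightarrow> b \<in> Z \<Longrightarrow> a + b \<in> Z"
    and uminus_closed: "\<And>a. a \<in> Z \<Longrightarrow> -a \<in> Z"
  shows "subgroup (affine_maps p Z) (BijGroup (Vp p))"
proof
  show "affine_maps p Z \<subseteq> carrier (BijGroup (Vp p))"
    using affine_map_Bij[OF assms(1)] by (auto simp: affine_maps_def BijGroup_def)
  show "\<one>\<^bsub>BijGroup (Vp p)\<^esub> \<in> affine_maps p Z"
    using affine_mapsI[of 1 0 Z p 0 0] assms(2)
    by (simp add: BijGroup_def affine_map_identity[OF assms(1)])
next
  fix f g assume "f \<in> affine_maps p Z" "g \<in> affine_maps p Z"
  then obtain s k e1 e2 s' k' f1 f2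
    where "f = affine_map p s k e1 e2" "s * s = 1" "k \<in> Z"
      and "g = affine_map p s' k' f1 f2" "s' * s' = 1" "k' \<in> Z"
    by (auto simp: affine_maps_def)
  moreover have "(s * s') * (s * s') = 1"
    by (metis \<open>s * s = 1\<close> \<open>s' * s' = 1\<close> mult.left_commute mult.assoc mult_1_right)
  ultimately show "f \<otimes>\<^bsub>BijGroup (Vp p)\<^esub> g \<in> affine_maps p Z"
    by (simp add: affine_map_mult[OF assms(1)] affine_mapsI add_closed)
next
  fix f assume "f \<in> affine_maps p Z"
  then obtain s k e1 e2 where "f = affine_map p s k e1 e2" "s * s = 1" "k \<in> Z"
    by (auto simp: affine_maps_def)
  then show "inv\<^bsub>BijGroup (Vp p)\<^esub> f \<in> affine_maps p Z"
    by (simp add: affine_map_inv[OF assms(1)] affine_mapsI uminus_closed)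
qed

lemma affine_map_eq_imp_shear_mod:
  assumes "p > 1" and "affine_map p s k e1 e2 = affine_map p s' k' e1' e2'"
  shows "(s * k) mod p = (s' * k') mod p"
proof -
  have "(0, 0) \<in> Vp p" "(1, 0) \<in> Vp p"
    using assms(1) by (auto simp: Vp_def)
  moreover note fun_cong[OF assms(2), of "(0, 0)"] fun_cong[OF assms(2), of "(1, 0)"]
  ultimately have "e2 mod p = e2' mod p" "(s * k + e2) mod p = (s' * k' + e2') mod p"
    by (simp_all add: affine_map_def)
  then show ?thesis
    by (metis add_diff_cancel_right' mod_diff_cong)
qed

lemma transl_eq_affine_map: "transl p a = affine_map p 1 0 (fst a) (snd a)"
  by (simp add: transl_def affine_map_def)

lemma matmap_x_eq_affine_map: "matmap p 1 1 0 1 = affine_map p 1 1 0 0"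
  by (simp add: matmap_def affine_map_def)

lemma matmap_y_eq_affine_map: "matmap p (-1) 0 0 (-1) = affine_map p (-1) 0 0 0"
  by (simp add: matmap_def affine_map_def)

lemma G7_generators_subset_affine_maps:
  "transl p ` Vp p \<union> {matmap p 1 1 0 1, matmap p (-1) 0 0 (-1)} \<subseteq> affine_maps p UNIV"
  by (auto simp: transl_eq_affine_map matmap_x_eq_affine_map matmap_y_eq_affine_map
      intro: affine_mapsI)

lemma G7_carrier_subset_affine_maps: "p > 0 \<Longrightarrow> G7_carrier p \<subseteq> affine_maps p UNIV"
  unfolding G7_carrier_def
  by (intro group.generate_subgroup_incl[OF group_BijGroup] G7_generators_subset_affine_maps
      subgroup_affine_maps) auto

lemma subgroup_G7_carrier: "p > 0 \<Longrightarrow> subgroup (G7_carrier p) (BijGroup (Vp p))"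
  unfolding G7_carrier_def
  using G7_generators_subset_affine_maps subgroup.subset[OF subgroup_affine_maps[of p UNIV]]
  by (intro group.generate_is_subgroup[OF group_BijGroup]) auto

lemma group_G7: "p > 0 \<Longrightarrow> group (G7 p)"
  unfolding G7_def by (rule subgroup.subgroup_is_group[OF subgroup_G7_carrier group_BijGroup])

lemma generate_G7:
  "p > 0 \<Longrightarrow> A \<subseteq> carrier (G7 p) \<Longrightarrow> generate (G7 p) A = generate (BijGroup (Vp p)) A"
  unfolding G7_def by (simp add: group.generate_consistent[OF group_BijGroup] subgroup_G7_carrier)

lemma affine_involution_shear_dvd:
  assumes "odd p" "p > 1" and "f \<in> affine_maps p UNIV"
    and "f \<otimes>\<^bsub>BijGroup (Vp p)\<^esub> f = \<one>\<^bsub>BijGroup (Vp p)\<^esub>"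
  shows "f \<in> affine_maps p {k. p dvd k}"
proof -
  obtain s k e1 e2 where f: "f = affine_map p s k e1 e2" "s * s = 1"
    using assms(3) by (auto simp: affine_maps_def)
  have "affine_map p (s * s) (k + k) (s * e1 + e1) (s * k * e1 + s * e2 + e2)
      = f \<otimes>\<^bsub>BijGroup (Vp p)\<^esub> f"
    using assms(2) f by (simp add: affine_map_mult)
  also have "\<dots> = affine_map p 1 0 0 0"
    using assms(2,4) by (simp add: BijGroup_def affine_map_identity)
  finally have "(s * s * (k + k)) mod p = (1 * 0) mod p"
    by (rule affine_map_eq_imp_shear_mod[OF assms(2)])
  then have "p dvd 2 * k"
    using f(2) by (simp add: mod_eq_0_iff_dvd)
  then have "p dvd k"
    using assms(1) by (simp add: coprime_dvd_mult_right_iff)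
  then show ?thesis
    using f by (simp add: affine_mapsI)
qed

lemma G7_order_two_in_affine_maps_dvd:
  assumes "odd p" "p > 1" and "r \<in> carrier (G7 p)" and "group.ord (G7 p) r = 2"
  shows "r \<in> affine_maps p {k. p dvd k}"
proof -
  interpret G7: group "G7 p"
    using assms(2) by (simp add: group_G7)
  have "r \<otimes>\<^bsub>G7 p\<^esub> r = \<one>\<^bsub>G7 p\<^esub>"
    using G7.pow_ord_eq_1[OF assms(3)] assms(3,4) by (simp add: numeral_2_eq_2)
  then show ?thesis
    using assms G7_carrier_subset_affine_maps[of p]
    by (intro affine_involution_shear_dvd) (auto simp: G7_def)
qed

lemma matmap_x_notin_affine_maps_dvd:
  assumes "p > 1"
  shows "matmap p 1 1 0 1 \<notin> affine_maps p {k. p dvd k}"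
proof
  assume "matmap p 1 1 0 1 \<in> affine_maps p {k. p dvd k}"
  then obtain s k e1 e2 where "affine_map p 1 1 0 0 = affine_map p s k e1 e2" "p dvd k"
    by (auto simp: affine_maps_def matmap_x_eq_affine_map)
  then have "1 mod p = 0"
    using affine_map_eq_imp_shear_mod[OF assms] by fastforce
  with assms show False
    by simp
qed

theorem mainTheorem14:
  fixes p :: int and r1 r2 :: "int \<times> int \<Rightarrow> int \<times> int"
  assumes "Factorial_Ring.prime p" and "p \<ge> 3"
    and "r1 \<in> carrier (G7 p)" and "r2 \<in> carrier (G7 p)"
    and "group.ord (G7 p) r1 = 2" and "group.ord (G7 p) r2 = 2"
    and "(G7 p)\<lparr>carrier := generate (G7 p) {r1, r2}\<rparr> \<cong> dihedral p"
    and "core (G7 p) (generate (G7 p) {r1, r2}) = {\<one>\<^bsub>G7 p\<^esub>}"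
  shows "\<forall>r0 \<in> carrier (G7 p). group.ord (G7 p) r0 = 2 \<longrightarrow>
           generate (G7 p) {r0, r1, r2} \<noteq> carrier (G7 p)"
proof (intro ballI impI)
  fix r0 assume r0: "r0 \<in> carrier (G7 p)" "group.ord (G7 p) r0 = 2"
  have p: "odd p" "p > 1"
    using assms(1,2) prime_odd_int by auto
  let ?K = "affine_maps p {k. p dvd k}"
  have "{r0, r1, r2} \<subseteq> ?K"
    using G7_order_two_in_affine_maps_dvd[OF p] r0 assms(3-6) by auto
  moreover have "subgroup ?K (BijGroup (Vp p))"
    using p by (intro subgroup_affine_maps) auto
  ultimately have "generate (BijGroup (Vp p)) {r0, r1, r2} \<subseteq> ?K"
    by (rule group.generate_subgroup_incl[OF group_BijGroup])
  moreover have "generate (G7 p) {r0, r1, r2} = generate (BijGroup (Vp p)) {r0, r1, r2}"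
    using p r0 assms(3,4) by (intro generate_G7) auto
  moreover have "matmap p 1 1 0 1 \<in> carrier (G7 p)"
    by (simp add: G7_def G7_carrier_def generate.incl)
  ultimately show "generate (G7 p) {r0, r1, r2} \<noteq> carrier (G7 p)"
    using matmap_x_notin_affine_maps_dvd[OF p(2)] by blast
qed

end
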